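(* Let $\psi\in\mathcal A$ with $S_\psi=0$. Then $\psi=0$ (identically on $G\times Y\times Y$).
   Context: Let $G$ be a locally compact abelian group (written additively) with Haar measure $\nu$, and $(Y,\lambda)$ a measure space. Let $H$ be a reproducing kernel Hilbert space of complex functions on $G\times Y$ whose inner product is that of $L^2(G\times Y,\nu\otimes\lambda)$, with reproducing kernel $(K_{x,y})_{(x,y)\in G\times Y}$ (so $f(x,y)=\langle f,K_{x,y}\rangle$). Assume $K_{x,y}(u,v)=K_{0,y}(u-x,v)$ for all $u,x\in G$, $v,y\in Y$. Let $\mathcal A_0$ be the set of functions $\psi\colon G\times Y\times Y\to\mathbb C$ such that $\psi(\cdot,\cdot,v)\in H$ for every $v\in Y$ and $(u,v)\mapsto\overline{\psi(-u,y,v)}$ belongs to $H$ for every $y\in Y$. For $\psi\in\mathcal A_0$, $f\in H$, define $(S_\psi f)(x,y)=\int_{G\times Y}f(u,v)\psi(x-u,y,v)\,d\nu(u)\,d\lambda(v)$. Let $\mathcal A$ be the set of $\psi\in\mathcal A_0$ such that $S_\psi f\in H$ for all $f\in H$ and $S_\psi$ is bounded on $H$. *)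

theory Defs
  imports "HOL-Analysis.Analysis"
begin

definition haar_measure :: "('g::{topological_ab_group_add,t2_space}) measure \<Rightarrow> bool" where
  "haar_measure nu \<longleftrightarrow>
     sets nu = sets borel \<and>
     emeasure nu UNIV \<noteq> 0 \<and>
     (\<forall>A\<in>sets borel. \<forall>a. emeasure nu ((+) a ` A) = emeasure nu A) \<and>
     (\<forall>K. compact K \<longrightarrow> emeasure nu K < \<infinity>) \<and>
     (\<forall>A\<in>sets borel. emeasure nu A = (INF U\<in>{U. open U \<and> A \<subseteq> U}. emeasure nu U)) \<and>
     (\<forall>U. open U \<longrightarrow> emeasure nu U = (SUP K\<in>{K. compact K \<and> K \<subseteq> U}. emeasure nu K))"

definition sq_integrable :: "'a measure \<Rightarrow> ('a \<Rightarrow> complex) \<Rightarrow> bool" where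
  "sq_integrable M f \<longleftrightarrow> f \<in> borel_measurable M \<and> integrable M (\<lambda>z. (cmod (f z))\<^sup>2)"

definition L2_inner :: "'a measure \<Rightarrow> ('a \<Rightarrow> complex) \<Rightarrow> ('a \<Rightarrow> complex) \<Rightarrow> complex" where
  "L2_inner M f g = (LINT z|M. f z * cnj (g z))"

definition L2_norm :: "'a measure \<Rightarrow> ('a \<Rightarrow> complex) \<Rightarrow> real" where
  "L2_norm M f = sqrt (LINT z|M. (cmod (f z))\<^sup>2)"

definition rkhs_L2 :: "'a measure \<Rightarrow> ('a \<Rightarrow> complex) set \<Rightarrow> ('a \<Rightarrow> 'a \<Rightarrow> complex) \<Rightarrow> bool" where
  "rkhs_L2 M H K \<longleftrightarrow>
     (\<forall>f\<in>H. sq_integrable M f) \<and>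
     (\<lambda>_. 0) \<in> H \<and>
     (\<forall>f\<in>H. \<forall>g\<in>H. (\<lambda>z. f z + g z) \<in> H) \<and>
     (\<forall>c. \<forall>f\<in>H. (\<lambda>z. c * f z) \<in> H) \<and>
     (\<forall>X. (\<forall>n. X n \<in> H) \<and>
          (\<forall>e>0. \<exists>N. \<forall>m\<ge>N. \<forall>n\<ge>N. L2_norm M (\<lambda>z. X m z - X n z) < e)
          \<longrightarrow> (\<exists>f\<in>H. (\<lambda>n. L2_norm M (\<lambda>z. X n z - f z)) \<longlonglongrightarrow> 0)) \<and>
     (\<forall>p. K p \<in> H) \<and>
     (\<forall>f\<in>H. \<forall>p. f p = L2_inner M f (K p))"

definition A0 :: "('g::ab_group_add \<times> 'y \<Rightarrow> complex) set \<Rightarrow> ('g \<Rightarrow> 'y \<Rightarrow> 'y \<Rightarrow> complex) set" where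
  "A0 H = {psi. (\<forall>v. (\<lambda>(u, y). psi u y v) \<in> H) \<and>
                (\<forall>y. (\<lambda>(u, v). cnj (psi (- u) y v)) \<in> H)}"

definition S_op :: "'g::ab_group_add measure \<Rightarrow> 'y measure \<Rightarrow> ('g \<Rightarrow> 'y \<Rightarrow> 'y \<Rightarrow> complex)
    \<Rightarrow> ('g \<times> 'y \<Rightarrow> complex) \<Rightarrow> ('g \<times> 'y \<Rightarrow> complex)" where
  "S_op nu lam psi f = (\<lambda>(x, y). LINT p|(nu \<Otimes>\<^sub>M lam). f p * psi (x - fst p) y (snd p))"

definition A_class :: "'g::ab_group_add measure \<Rightarrow> 'y measure \<Rightarrow> ('g \<times> 'y \<Rightarrow> complex) set
    \<Rightarrow> ('g \<Rightarrow> 'y \<Rightarrow> 'y \<Rightarrow> complex) set" where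
  "A_class nu lam H = {psi \<in> A0 H.
      (\<forall>f\<in>H. S_op nu lam psi f \<in> H) \<and>
      (\<exists>C. \<forall>f\<in>H. L2_norm (nu \<Otimes>\<^sub>M lam) (S_op nu lam psi f) \<le> C * L2_norm (nu \<Otimes>\<^sub>M lam) f)}"

end

theory Submission
  imports Defs
begin

text \<open>Testing S_psi against a kernel function recovers psi pointwise:
  by the reproducing property applied to the function (u, v) \<mapsto> cnj (psi (- u) y v) of H,
  psi a y w = (S_psi K_(-a, w)) (0, y). So S_psi = 0 forces psi = 0; no translation
  invariance or boundedness is needed.\<close>

lemma rkhs_L2_cnj_eval:
  assumes "rkhs_L2 M H K" and "f \<in> H"
  shows "cnj (f p) = (LINT q|M. K p q * cnj (f q))"
proof -
  have "f p = (LINT q|M. f q * cnj (K p q))"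
    using assms unfolding rkhs_L2_def L2_inner_def by blast
  then have "cnj (f p) = (LINT q|M. cnj (f q * cnj (K p q)))"
    by (simp only: Bochner_Integration.integral_cnj)
  also have "\<dots> = (LINT q|M. K p q * cnj (f q))"
    by (simp only: complex_cnj_mult complex_cnj_cnj mult.commute)
  finally show ?thesis .
qed

lemma S_op_kernel_eq:
  assumes "rkhs_L2 (nu \<Otimes>\<^sub>M lam) H K" and "psi \<in> A0 H"
  shows "S_op nu lam psi (K (- a, w)) (0, y) = psi a y w"
proof -
  define h where "h = (\<lambda>(u, v). cnj (psi (- u) y v))"
  have "h \<in> H"
    using assms(2) unfolding A0_def h_def by blast
  with assms(1) have "cnj (h (- a, w)) = (LINT q|(nu \<Otimes>\<^sub>M lam). K (- a, w) q * cnj (h q))"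
    by (rule rkhs_L2_cnj_eval)
  then show ?thesis
    unfolding S_op_def h_def by (simp add: case_prod_beta)
qed

theorem proposition5p11:
  fixes nu :: "'g::{topological_ab_group_add,t2_space} measure"
    and lam :: "'y measure"
    and H :: "('g \<times> 'y \<Rightarrow> complex) set"
    and K :: "'g \<times> 'y \<Rightarrow> 'g \<times> 'y \<Rightarrow> complex"
    and psi :: "'g \<Rightarrow> 'y \<Rightarrow> 'y \<Rightarrow> complex"
  assumes "locally_compact_space (euclidean :: 'g topology)"
    and "haar_measure nu"
    and "space lam = UNIV"
    and "rkhs_L2 (nu \<Otimes>\<^sub>M lam) H K"
    and "\<And>x y u v. K (x, y) (u, v) = K (0, y) (u - x, v)"
    and "psi \<in> A_class nu lam H"
    and "\<forall>f\<in>H. S_op nu lam psi f = (\<lambda>_. 0)"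
  shows "psi = (\<lambda>_ _ _. 0)"
proof (intro ext)
  fix a y w
  have "psi \<in> A0 H"
    using assms(6) unfolding A_class_def by blast
  then have "psi a y w = S_op nu lam psi (K (- a, w)) (0, y)"
    using assms(4) by (simp add: S_op_kernel_eq)
  also have "\<dots> = 0"
    using assms(4,7) unfolding rkhs_L2_def by simp
  finally show "psi a y w = 0" .
qed

end
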